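(* Let $\mathbf M=(M,N)$ be a flag matroid of rank $(1,n-1)$ on $[n]$. The polytope $P_{\mathbf M}$ is contained in the boundary of $\Delta(1,n-1;n)$ if and only if there is no element $i\in[n]$ which is neither a loop of $M$ nor a coloop of $N$.
   Context: A flag matroid $(M,N)$ of rank $(1,n-1)$: $M$ a rank-1 matroid, $N$ a rank-$(n-1)$ matroid on $[n]$, every flat of $M$ being a flat of $N$. With $e_B=\sum_{i\in B}e_i$, $P_{\mathbf M}=\operatorname{conv}\{e_i:\{i\}\text{ basis of }M\}+\operatorname{conv}\{e_B:B\text{ basis of }N\}$, and $\Delta(1,n-1;n)$ is the polytope of the flag of uniform matroids $(U_{1,n},U_{n-1,n})$, i.e. $\Delta(1,n)+\Delta(n-1,n)$ where $\Delta(d,n)=\operatorname{conv}\{e_B:|B|=d\}$ (both may be translated by $-(1,\dots,1)$; boundary is taken relative to the affine hull of $\Delta(1,n-1;n)$). *)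

theory Defs
  imports "HOL-Analysis.Analysis"
begin

text \<open>Matroids on the finite ground set UNIV :: 'n set (this is [n], n = CARD('n)),
  given by their set of bases.\<close>

definition matroid_bases :: "'n::finite set set \<Rightarrow> bool" where
  "matroid_bases \<B> \<longleftrightarrow> \<B> \<noteq> {} \<and>
     (\<forall>B1\<in>\<B>. \<forall>B2\<in>\<B>. \<forall>x\<in>B1 - B2. \<exists>y\<in>B2 - B1. insert y (B1 - {x}) \<in> \<B>)"

definition mrank :: "'n::finite set set \<Rightarrow> 'n set \<Rightarrow> nat" where
  "mrank \<B> X = Max ((\<lambda>B. card (X \<inter> B)) ` \<B>)"

definition is_flat :: "'n::finite set set \<Rightarrow> 'n set \<Rightarrow> bool" where
  "is_flat \<B> F \<longleftrightarrow> (\<forall>e. e \<notin> F \<longrightarrow> mrank \<B> (insert e F) > mrank \<B> F)"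

definition is_loop :: "'n::finite set set \<Rightarrow> 'n \<Rightarrow> bool" where
  "is_loop \<B> i \<longleftrightarrow> (\<forall>B\<in>\<B>. i \<notin> B)"

definition is_coloop :: "'n::finite set set \<Rightarrow> 'n \<Rightarrow> bool" where
  "is_coloop \<B> i \<longleftrightarrow> (\<forall>B\<in>\<B>. i \<in> B)"

definition flag_matroid :: "'n::finite set set \<Rightarrow> 'n set set \<Rightarrow> bool" where
  "flag_matroid \<B>M \<B>N \<longleftrightarrow> matroid_bases \<B>M \<and> matroid_bases \<B>N \<and>
     (\<forall>F. is_flat \<B>M F \<longrightarrow> is_flat \<B>N F)"

definition indicator_vec :: "'n::finite set \<Rightarrow> real^'n" where
  "indicator_vec B = (\<chi> i. if i \<in> B then 1 else 0)"

definition minkowski_sum :: "(real^'n) set \<Rightarrow> (real^'n) set \<Rightarrow> (real^'n) set" where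
  "minkowski_sum P Q = {x + y | x y. x \<in> P \<and> y \<in> Q}"

definition matroid_polytope :: "'n::finite set set \<Rightarrow> (real^'n) set" where
  "matroid_polytope \<B> = convex hull (indicator_vec ` \<B>)"

definition flag_polytope :: "'n::finite set set \<Rightarrow> 'n set set \<Rightarrow> (real^'n) set" where
  "flag_polytope \<B>M \<B>N = minkowski_sum (matroid_polytope \<B>M) (matroid_polytope \<B>N)"

definition hypersimplex :: "nat \<Rightarrow> (real^'n::finite) set" where
  "hypersimplex d = convex hull (indicator_vec ` {B. card B = d})"

definition Delta_1_nm1 :: "(real^'n::finite) set" where
  "Delta_1_nm1 = minkowski_sum (hypersimplex 1) (hypersimplex (CARD('n) - 1))"

end

theory Submission
  imports Defs
begin

text \<open>Every basis of M is a singleton {i} with i a non-loop, and every basis of N is a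
  complement -{j} with j a non-coloop. If some i is both, then P_M contains
  e_i + (1 - e_i) = 1, the sum of the barycentres of the two hypersimplices, which is a relative
  interior point of \<Delta>(1,n-1;n). Otherwise, with S the set of non-loops of M, the linear
  functional x \<mapsto> \<Sum>_{i \<in> S} x_i is at most 1 + |S| on \<Delta>(1,n-1;n), equals 1 + |S| on P_M
  and equals |S| at 1, so P_M lies in a proper face of \<Delta>(1,n-1;n).\<close>

lemma barycentre_in_rel_interior_convex_hull:
  fixes f :: "'i::finite \<Rightarrow> 'a::euclidean_space"
  assumes "inj f"
  shows "(\<Sum>j\<in>UNIV. (1 / real CARD('i)) *\<^sub>R f j) \<in> rel_interior (convex hull (range f))"
proof -
  define u where "u = (\<lambda>x::'a. 1 / real CARD('i))"
  have "finite (range f)" by simp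
  moreover have "\<forall>x\<in>range f. 0 < u x" by (simp add: u_def)
  moreover have "card (range f) = CARD('i)" using assms by (simp add: card_image)
  then have "sum u (range f) = 1" by (simp add: u_def)
  moreover have "(\<Sum>x\<in>range f. u x *\<^sub>R x) = (\<Sum>j\<in>UNIV. (1 / real CARD('i)) *\<^sub>R f j)"
    using assms by (simp add: sum.reindex u_def)
  ultimately show ?thesis using explicit_subset_rel_interior_convex_hull_minimal by blast
qed

lemma convex_hulls_sum_subset_halfspace_le:
  fixes a :: "'a::real_inner"
  assumes "\<And>v. v \<in> V \<Longrightarrow> a \<bullet> v \<le> c" and "\<And>w. w \<in> W \<Longrightarrow> a \<bullet> w \<le> d"
  shows "convex hull V + convex hull W \<subseteq> {x. a \<bullet> x \<le> c + d}"
proof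
  have hull_V: "convex hull V \<subseteq> {x. a \<bullet> x \<le> c}"
    by (rule hull_minimal) (use assms(1) convex_halfspace_le in auto)
  have hull_W: "convex hull W \<subseteq> {x. a \<bullet> x \<le> d}"
    by (rule hull_minimal) (use assms(2) convex_halfspace_le in auto)
  fix x assume "x \<in> convex hull V + convex hull W"
  then obtain v w where "x = v + w" "v \<in> convex hull V" "w \<in> convex hull W"
    by (rule set_plus_elim)
  moreover from this hull_V hull_W have "a \<bullet> v \<le> c" "a \<bullet> w \<le> d" by blast+
  ultimately show "x \<in> {x. a \<bullet> x \<le> c + d}" by (simp add: inner_add_right)
qed

lemma convex_hulls_sum_subset_halfspace_ge:
  fixes a :: "'a::real_inner"
  assumes "\<And>v. v \<in> V \<Longrightarrow> c \<le> a \<bullet> v" and "\<And>w. w \<in> W \<Longrightarrow> d \<le> a \<bullet> w"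
  shows "convex hull V + convex hull W \<subseteq> {x. c + d \<le> a \<bullet> x}"
proof -
  have "convex hull V + convex hull W \<subseteq> {x. - a \<bullet> x \<le> - c + - d}"
    by (rule convex_hulls_sum_subset_halfspace_le) (simp_all add: assms)
  then show ?thesis by auto
qed

lemma subset_rel_frontier_supporting_hyperplane:
  fixes D :: "'a::real_inner set"
  assumes "convex D" and "P \<subseteq> D"
    and "D \<subseteq> {z. a \<bullet> z \<le> c}" and "P \<subseteq> {x. c \<le> a \<bullet> x}"
    and "y \<in> D" and "a \<bullet> y < c"
  shows "P \<subseteq> rel_frontier D"
proof -
  let ?F = "D \<inter> {x. a \<bullet> x = c}"
  have "?F face_of D" using assms(1,3) by (blast intro: face_of_Int_supporting_hyperplane_le)
  moreover have "?F \<noteq> D" using assms(5,6) by auto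
  ultimately have "?F \<subseteq> rel_frontier D" by (rule face_of_subset_rel_frontier)
  moreover have "P \<subseteq> ?F"
  proof
    fix x assume "x \<in> P"
    with assms(2-4) have "x \<in> D" "a \<bullet> x = c" by (auto intro!: order.antisym)
    then show "x \<in> ?F" by simp
  qed
  ultimately show ?thesis by blast
qed

lemma minkowski_sum_eq_set_plus: "minkowski_sum P Q = P + Q"
  unfolding minkowski_sum_def set_plus_def by auto

lemma inner_indicator_vec: "indicator_vec A \<bullet> indicator_vec B = real (card (A \<inter> B))"
proof -
  have "indicator_vec A \<bullet> indicator_vec B = (\<Sum>i\<in>UNIV. if i \<in> A \<inter> B then 1 else (0::real))"
    unfolding inner_vec_def indicator_vec_def by (intro sum.cong) auto
  also have "\<dots> = real (card (A \<inter> B))"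
    by (simp add: sum.If_cases Int_def)
  finally show ?thesis .
qed

lemma inj_indicator_vec: "inj indicator_vec"
  by (rule injI) (auto simp: indicator_vec_def vec_eq_iff split: if_splits)

lemma indicator_vec_add_Compl: "indicator_vec A + indicator_vec (- A) = indicator_vec UNIV"
  by (simp add: vec_eq_iff indicator_vec_def)

lemma card_eq_CARD_minus_one_iff:
  fixes B :: "'n::finite set"
  shows "card B = CARD('n) - 1 \<longleftrightarrow> (\<exists>j. B = - {j})"
proof
  assume card_B: "card B = CARD('n) - 1"
  then have "card B < card (UNIV :: 'n set)" by simp
  then have "B \<noteq> UNIV" by auto
  then obtain j where "j \<notin> B" by auto
  then have "B \<subseteq> - {j}" by auto
  moreover have "card (- {j}) = CARD('n) - 1"
    by (simp add: Compl_eq_Diff_UNIV card_Diff_singleton)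
  ultimately show "\<exists>j. B = - {j}" using card_B by (metis card_subset_eq finite)
qed (auto simp: Compl_eq_Diff_UNIV card_Diff_singleton)

lemma bases_rank_one:
  assumes "\<forall>B\<in>\<B>. card B = 1"
  shows "\<B> = (\<lambda>i. {i}) ` {i. \<not> is_loop \<B> i}"
proof (intro set_eqI iffI)
  fix B assume "B \<in> \<B>"
  moreover from this assms obtain i where "B = {i}" by (metis card_1_singletonE)
  ultimately show "B \<in> (\<lambda>i. {i}) ` {i. \<not> is_loop \<B> i}" unfolding is_loop_def by blast
next
  fix B assume "B \<in> (\<lambda>i. {i}) ` {i. \<not> is_loop \<B> i}"
  then obtain i C where "B = {i}" "C \<in> \<B>" "i \<in> C" unfolding is_loop_def by blast
  moreover from this assms have "C = {i}" by (metis card_1_singletonE singletonD)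
  ultimately show "B \<in> \<B>" by simp
qed

lemma bases_corank_one:
  fixes \<B> :: "'n::finite set set"
  assumes "\<forall>B\<in>\<B>. card B = CARD('n) - 1"
  shows "\<B> = (\<lambda>j. - {j}) ` {j. \<not> is_coloop \<B> j}"
proof (intro set_eqI iffI)
  fix B assume "B \<in> \<B>"
  moreover from this assms obtain j where "B = - {j}" by (metis card_eq_CARD_minus_one_iff)
  ultimately show "B \<in> (\<lambda>j. - {j}) ` {j. \<not> is_coloop \<B> j}" unfolding is_coloop_def by blast
next
  fix B assume "B \<in> (\<lambda>j. - {j}) ` {j. \<not> is_coloop \<B> j}"
  then obtain j C where "B = - {j}" "C \<in> \<B>" "j \<notin> C" unfolding is_coloop_def by blast
  moreover from this assms have "C = - {j}" by (metis card_eq_CARD_minus_one_iff ComplI singletonD)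
  ultimately show "B \<in> \<B>" by simp
qed

lemma hypersimplex_one:
  "(hypersimplex 1 :: (real^'n::finite) set) = convex hull (range (\<lambda>j::'n. indicator_vec {j}))"
proof -
  have "{B :: 'n set. card B = 1} = range (\<lambda>j. {j})" by (auto simp: card_1_singleton_iff)
  then show ?thesis by (simp only: hypersimplex_def image_image)
qed

lemma hypersimplex_corank_one:
  "(hypersimplex (CARD('n) - 1) :: (real^'n::finite) set)
     = convex hull (range (\<lambda>j::'n. indicator_vec (- {j})))"
proof -
  have "{B::'n set. card B = CARD('n) - 1} = range (\<lambda>j. - {j})"
    using card_eq_CARD_minus_one_iff[where 'n='n] by blast
  then show ?thesis by (simp only: hypersimplex_def image_image)
qed

lemma indicator_vec_UNIV_in_rel_interior_Delta_1_nm1: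
  "indicator_vec UNIV \<in> rel_interior (Delta_1_nm1 :: (real^'n::finite) set)"
proof -
  let ?n = "real CARD('n)"
  define b1 where "b1 = (\<Sum>j\<in>UNIV. (1 / ?n) *\<^sub>R (indicator_vec {j} :: real^'n))"
  define b2 where "b2 = (\<Sum>j\<in>UNIV. (1 / ?n) *\<^sub>R (indicator_vec (- {j}) :: real^'n))"
  have "inj (\<lambda>j::'n. indicator_vec {j} :: real^'n)"
    using inj_indicator_vec unfolding inj_def by blast
  then have "b1 \<in> rel_interior (hypersimplex 1)"
    unfolding hypersimplex_one b1_def by (rule barycentre_in_rel_interior_convex_hull)
  moreover have "inj (\<lambda>j::'n. indicator_vec (- {j}) :: real^'n)"
    using inj_indicator_vec unfolding inj_def by blast
  then have "b2 \<in> rel_interior (hypersimplex (CARD('n) - 1))"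
    unfolding hypersimplex_corank_one b2_def by (rule barycentre_in_rel_interior_convex_hull)
  moreover have "b1 + b2 = (\<Sum>j\<in>(UNIV :: 'n set). (1 / ?n) *\<^sub>R indicator_vec UNIV)"
    unfolding b1_def b2_def sum.distrib[symmetric] scaleR_add_right[symmetric]
      indicator_vec_add_Compl by simp
  then have "b1 + b2 = indicator_vec UNIV"
    by (simp only: sum_constant_scaleR scaleR_scaleR) simp
  moreover have "rel_interior (Delta_1_nm1 :: (real^'n) set)
      = rel_interior (hypersimplex 1) + rel_interior (hypersimplex (CARD('n) - 1))"
    unfolding Delta_1_nm1_def minkowski_sum_eq_set_plus hypersimplex_def
    by (simp add: rel_interior_sum)
  ultimately show ?thesis by (metis set_plus_intro)
qed

lemma indicator_vec_UNIV_in_flag_polytope: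
  assumes "{i} \<in> BM" and "- {i} \<in> BN"
  shows "indicator_vec UNIV \<in> flag_polytope BM BN"
proof -
  have "indicator_vec {i} \<in> matroid_polytope BM" "indicator_vec (- {i}) \<in> matroid_polytope BN"
    using assms unfolding matroid_polytope_def by (auto intro: hull_inc)
  then show ?thesis
    unfolding flag_polytope_def minkowski_sum_eq_set_plus
    by (metis indicator_vec_add_Compl set_plus_intro)
qed

lemma flag_polytope_subset_rel_frontier_Delta_1_nm1:
  fixes S T :: "'n::finite set"
  assumes "S \<inter> T = {}"
  shows "flag_polytope ((\<lambda>i. {i}) ` S) ((\<lambda>j. - {j}) ` T)
           \<subseteq> rel_frontier (Delta_1_nm1 :: (real^'n) set)"
proof -
  let ?a = "indicator_vec S :: real^'n" and ?c = "1 + real (card S)"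
  let ?P = "flag_polytope ((\<lambda>i. {i}) ` S) ((\<lambda>j. - {j}) ` T)"
  let ?D = "Delta_1_nm1 :: (real^'n) set"
  have P_eq: "?P = convex hull ((\<lambda>i. indicator_vec {i}) ` S)
                     + convex hull ((\<lambda>j. indicator_vec (- {j})) ` T)"
    unfolding flag_polytope_def minkowski_sum_eq_set_plus matroid_polytope_def image_image ..
  have D_eq: "?D = convex hull (range (\<lambda>j. indicator_vec {j}))
                     + convex hull (range (\<lambda>j. indicator_vec (- {j})))"
    unfolding Delta_1_nm1_def minkowski_sum_eq_set_plus hypersimplex_one hypersimplex_corank_one
    ..
  have "convex ?D" unfolding D_eq by (intro convex_set_plus convex_convex_hull)
  moreover have "?P \<subseteq> ?D" unfolding P_eq D_eq by (intro set_plus_mono2 hull_mono) auto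
  moreover have "?D \<subseteq> {z. ?a \<bullet> z \<le> ?c}"
  proof -
    have "card (S \<inter> {j}) \<le> 1" for j
      using card_mono[of "{j}" "S \<inter> {j}"] by simp
    moreover have "card (S \<inter> - {j}) \<le> card S" for j
      by (rule card_mono) auto
    ultimately show ?thesis
      unfolding D_eq
      by (intro convex_hulls_sum_subset_halfspace_le) (auto simp: inner_indicator_vec)
  qed
  moreover have "?P \<subseteq> {x. ?c \<le> ?a \<bullet> x}"
  proof -
    have "S \<inter> {i} = {i}" if "i \<in> S" for i using that by auto
    moreover have "S \<inter> - {j} = S" if "j \<in> T" for j using that assms by auto
    ultimately show ?thesis
      unfolding P_eq
      by (intro convex_hulls_sum_subset_halfspace_ge) (auto simp: inner_indicator_vec)
  qed
  moreover have "indicator_vec {k} + indicator_vec (- {k}) \<in> ?D" for k :: 'n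
    unfolding D_eq by (intro set_plus_intro hull_inc) auto
  then have "indicator_vec UNIV \<in> ?D" by (metis indicator_vec_add_Compl)
  moreover have "?a \<bullet> indicator_vec UNIV < ?c" by (simp add: inner_indicator_vec)
  ultimately show ?thesis by (rule subset_rel_frontier_supporting_hyperplane)
qed

theorem proposition6p2:
  fixes BM BN :: "'n::finite set set"
  assumes "flag_matroid BM BN"
    and "\<forall>B\<in>BM. card B = 1"
    and "\<forall>B\<in>BN. card B = CARD('n) - 1"
  shows "flag_polytope BM BN \<subseteq> rel_frontier (Delta_1_nm1 :: (real^'n) set)
     \<longleftrightarrow> \<not> (\<exists>i. \<not> is_loop BM i \<and> \<not> is_coloop BN i)"
proof -
  let ?S = "{i. \<not> is_loop BM i}" and ?T = "{j. \<not> is_coloop BN j}"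
  have BM: "BM = (\<lambda>i. {i}) ` ?S" using assms(2) by (rule bases_rank_one)
  have BN: "BN = (\<lambda>j. - {j}) ` ?T" using assms(3) by (rule bases_corank_one)
  show ?thesis
  proof
    assume "flag_polytope BM BN \<subseteq> rel_frontier (Delta_1_nm1 :: (real^'n) set)"
    then have "indicator_vec UNIV \<notin> flag_polytope BM BN"
      using indicator_vec_UNIV_in_rel_interior_Delta_1_nm1 unfolding rel_frontier_def by blast
    moreover have "{i} \<in> BM" "- {i} \<in> BN" if "i \<in> ?S \<inter> ?T" for i
      using that BM BN by blast+
    ultimately show "\<not> (\<exists>i. \<not> is_loop BM i \<and> \<not> is_coloop BN i)"
      using indicator_vec_UNIV_in_flag_polytope by blast
  next
    assume "\<not> (\<exists>i. \<not> is_loop BM i \<and> \<not> is_coloop BN i)"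
    then have "?S \<inter> ?T = {}" by blast
    then show "flag_polytope BM BN \<subseteq> rel_frontier (Delta_1_nm1 :: (real^'n) set)"
      using flag_polytope_subset_rel_frontier_Delta_1_nm1 BM BN by metis
  qed
qed

end
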